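(* Let $m\ge 2$, $\epsilon>0$, and $\varphi_j=2^{-j}$ for $j\ge 0$. For $j=1,\dots,m$ let $\beta_j,\beta_j':[0,1]\to\mathbb{R}$ be functions such that for all $x\in[0,1]$: $\beta_j(x)^2+\beta_j'(x)^2=1$; if $0\le x\le\varphi_j$ then $\beta_j(x)^2\le\epsilon^2$; and if $2\varphi_j\le x\le 1$ then $\beta_j(x)^2\ge 1-\epsilon^2$. Define $B_j'(x)=\prod_{i=1}^{j}\beta_i'(x)$ (with $B_0'\equiv 1$) and $B_j(x)=B_{j-1}'(x)\beta_j(x)$. Then for every $j$ with $1\le j\le m-1$ and every $x\in[\varphi_j,\varphi_{j-1})$, $$B_j(x)^2+B_{j+1}(x)^2\ge 1-\mathcal{O}(j\epsilon^2).$$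
   Context: $\mathcal{O}(\cdot)$ hides an absolute constant. *)

theory Defs
  imports Complex_Main
begin

definition phi :: "nat \<Rightarrow> real" where
  "phi j = (1/2) ^ j"

definition Bprime :: "(nat \<Rightarrow> real \<Rightarrow> real) \<Rightarrow> nat \<Rightarrow> real \<Rightarrow> real" where
  "Bprime beta' j x = (\<Prod>i=1..j. beta' i x)"

definition Bfun :: "(nat \<Rightarrow> real \<Rightarrow> real) \<Rightarrow> (nat \<Rightarrow> real \<Rightarrow> real) \<Rightarrow> nat \<Rightarrow> real \<Rightarrow> real" where
  "Bfun beta beta' j x = Bprime beta' (j - 1) x * beta j x"

end

theory Submission
  imports Defs
begin

text \<open>For i < j the point x lies left of phi i, so beta i x is small and beta' i x is close to 1
  in absolute value: hence B'_(j-1)(x)^2 is at least (1 - eps^2)^(j-1). Moreover x lies right of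
  2 phi (j+1), so beta (j+1) x^2 is at least 1 - eps^2. Since
  B_j^2 + B_(j+1)^2 = B'_(j-1)^2 (beta_j^2 + beta'_j^2 beta_(j+1)^2) and the bracket is a convex
  combination of 1 and beta_(j+1)^2, the sum is at least (1 - eps^2)^j, which Bernoulli's
  inequality bounds below by 1 - j eps^2. So the constant can be taken to be 1.\<close>

lemma phi_antimono: "i \<le> k \<Longrightarrow> phi k \<le> phi i"
  unfolding phi_def by (simp add: power_decreasing)

lemma phi_pos: "0 < phi i"
  unfolding phi_def by simp

lemma phi_le_one: "phi i \<le> 1"
  unfolding phi_def by (simp add: power_le_one)

lemma phi_Suc: "2 * phi (Suc i) = phi i"
  unfolding phi_def by simp

lemma Bprime_Suc: "Bprime beta' (Suc k) x = Bprime beta' k x * beta' (Suc k) x"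
  unfolding Bprime_def by (simp add: prod.nat_ivl_Suc')

lemma power_le_Bprime_sq:
  fixes a :: real
  assumes "0 \<le> a" and "\<forall>i\<in>{1..k}. a \<le> (beta' i x)^2"
  shows "a ^ k \<le> (Bprime beta' k x)^2"
proof -
  have "(\<Prod>i=1..k. a) \<le> (\<Prod>i=1..k. (beta' i x)^2)"
    using assms by (intro prod_mono) auto
  then show ?thesis
    unfolding Bprime_def by (simp add: prod_power_distrib)
qed

lemma Bfun_sq_add_Bfun_Suc_sq:
  "(Bfun beta beta' (Suc k) x)^2 + (Bfun beta beta' (Suc (Suc k)) x)^2
     = (Bprime beta' k x)^2 * ((beta (Suc k) x)^2 + (beta' (Suc k) x)^2 * (beta (Suc (Suc k)) x)^2)"
  by (simp add: Bfun_def Bprime_Suc power_mult_distrib algebra_simps)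

lemma convex_combination_ge:
  fixes p q a c :: real
  assumes "p + q = 1" "0 \<le> p" "0 \<le> q" "a \<le> 1" "a \<le> c"
  shows "a \<le> p + q * c"
proof -
  have "a \<le> a + p * (1 - a)"
    using assms by simp
  also have "\<dots> = p + q * a"
    using assms(1) by (simp add: algebra_simps flip: distrib_left)
  also have "\<dots> \<le> p + q * c"
    using assms by (simp add: mult_left_mono)
  finally show ?thesis .
qed

lemma Bfun_sq_sum_ge:
  fixes e :: real
  assumes "1 \<le> j"
    and unit: "\<forall>i\<in>{1..j}. (beta i x)^2 + (beta' i x)^2 = 1"
    and small: "\<forall>i\<in>{1..<j}. (beta i x)^2 \<le> e^2"
    and large: "1 - e^2 \<le> (beta (j + 1) x)^2"
  shows "1 - real j * e^2 \<le> (Bfun beta beta' j x)^2 + (Bfun beta beta' (j + 1) x)^2"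
proof (cases "e^2 \<le> 1")
  case False
  have "e^2 \<le> real j * e^2"
    using \<open>1 \<le> j\<close> by (simp add: mult_le_cancel_right1)
  moreover have "0 \<le> (Bfun beta beta' j x)^2 + (Bfun beta beta' (j + 1) x)^2"
    by simp
  ultimately show ?thesis
    using False by linarith
next
  case True
  define a where "a = 1 - e^2"
  obtain k where k: "j = Suc k"
    using \<open>1 \<le> j\<close> by (cases j) auto
  have "\<forall>i\<in>{1..k}. a \<le> (beta' i x)^2"
    using unit small unfolding a_def k by force
  then have "a ^ k \<le> (Bprime beta' k x)^2"
    using True by (intro power_le_Bprime_sq) (auto simp: a_def)
  moreover have "a \<le> (beta j x)^2 + (beta' j x)^2 * (beta (j + 1) x)^2"
    using unit large \<open>1 \<le> j\<close> by (intro convex_combination_ge) (auto simp: a_def)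
  ultimately have "a ^ k * a \<le> (Bfun beta beta' j x)^2 + (Bfun beta beta' (j + 1) x)^2"
    unfolding k Suc_eq_plus1[symmetric] Bfun_sq_add_Bfun_Suc_sq
    using True by (intro mult_mono) (auto simp: a_def)
  moreover have "1 - real j * e^2 \<le> a ^ j"
    using Bernoulli_inequality[of "- (e^2)" j] True by (simp add: a_def)
  ultimately show ?thesis
    unfolding k by (simp add: mult.commute)
qed

theorem lemma8:
  shows "\<exists>C::real. \<forall>(m::nat) (\<epsilon>::real) (beta::nat \<Rightarrow> real \<Rightarrow> real) (beta'::nat \<Rightarrow> real \<Rightarrow> real).
    m \<ge> 2 \<longrightarrow> \<epsilon> > 0 \<longrightarrow>
    (\<forall>j\<in>{1..m}. \<forall>x\<in>{0..1}.
        (beta j x)^2 + (beta' j x)^2 = 1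
      \<and> (x \<le> phi j \<longrightarrow> (beta j x)^2 \<le> \<epsilon>^2)
      \<and> (2 * phi j \<le> x \<longrightarrow> (beta j x)^2 \<ge> 1 - \<epsilon>^2)) \<longrightarrow>
    (\<forall>j x. 1 \<le> j \<and> j \<le> m - 1 \<and> phi j \<le> x \<and> x < phi (j - 1) \<longrightarrow>
       (Bfun beta beta' j x)^2 + (Bfun beta beta' (j + 1) x)^2 \<ge> 1 - C * real j * \<epsilon>^2)"
proof (rule exI[of _ 1], intro allI impI)
  fix m :: nat and e :: real and beta beta' :: "nat \<Rightarrow> real \<Rightarrow> real" and j :: nat and x :: real
  assume H: "\<forall>j\<in>{1..m}. \<forall>x\<in>{0..1}.
        (beta j x)^2 + (beta' j x)^2 = 1
      \<and> (x \<le> phi j \<longrightarrow> (beta j x)^2 \<le> e^2)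
      \<and> (2 * phi j \<le> x \<longrightarrow> (beta j x)^2 \<ge> 1 - e^2)"
    and "m \<ge> 2" and J: "1 \<le> j \<and> j \<le> m - 1 \<and> phi j \<le> x \<and> x < phi (j - 1)"
  then have "j + 1 \<le> m" by linarith
  have x: "x \<in> {0..1}"
    using J phi_pos[of j] phi_le_one[of "j - 1"] by auto
  have "\<forall>i\<in>{1..<j}. x \<le> phi i"
  proof
    fix i assume "i \<in> {1..<j}"
    then have "phi (j - 1) \<le> phi i"
      by (intro phi_antimono) auto
    then show "x \<le> phi i"
      using J by linarith
  qed
  moreover have "2 * phi (j + 1) \<le> x"
    using J phi_Suc[of j] by simp
  ultimately have "1 - real j * e^2 \<le> (Bfun beta beta' j x)^2 + (Bfun beta beta' (j + 1) x)^2"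
    using H x J \<open>j + 1 \<le> m\<close> by (intro Bfun_sq_sum_ge) auto
  then show "(Bfun beta beta' j x)^2 + (Bfun beta beta' (j + 1) x)^2 \<ge> 1 - 1 * real j * e^2"
    by simp
qed

end
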